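(* Let $a\ge2$ be an integer. Then $$D_{2^a+1}\equiv 3+2^{a+2}\pmod{4^{a+1}}\qquad\text{and}\qquad D_{2^a-1}\equiv -1\pmod{4^{a+1}}.$$
   Context: $D_n=\sum_{k=0}^{n}\binom{n}{k}\binom{n+k}{k}$ are the central Delannoy numbers. *)

theory Defs
  imports Main "HOL-Number_Theory.Cong"
begin

definition delannoy :: "nat \<Rightarrow> nat" where
  "delannoy n = (\<Sum>k=0..n. (n choose k) * ((n + k) choose k))"

end

theory Submission
  imports Defs HOL.Rat
begin

text \<open>
  Swapping the order of summation in the definition gives
  \<open>D\<^sub>n = \<Sum>\<^sub>k 2\<^sup>k C(n,k)\<^sup>2\<close>. For \<open>n = 2\<^sup>a \<plusminus> 1\<close> the binomial coefficients
  are highly divisible by 2: if \<open>2\<^sup>L \<le> k < 2\<^sup>L\<^sup>+\<^sup>1\<close> then \<open>2\<^sup>a\<^sup>-\<^sup>L\<close> divides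
  \<open>C(2\<^sup>a,k)\<close>, hence also \<open>C(2\<^sup>a+1,k)\<close> and \<open>(-1)\<^sup>k C(2\<^sup>a-1,k) - 1\<close>.
  So every term with \<open>k \<ge> 6\<close> vanishes modulo \<open>4\<^sup>a\<^sup>+\<^sup>1\<close> (for \<open>D\<^bsub>2\<^sup>a-1\<^esub>\<close> after
  rewriting the sum with the shifted coefficients \<open>(-1)\<^sup>k C(n,k) - 1\<close>), and the
  remaining six terms are polynomials in \<open>2\<^sup>a\<close> that can be reduced explicitly.
\<close>

lemma sum_choose_mult_choose:
  assumes "j \<le> n"
  shows "(\<Sum>k\<le>n. (n choose k) * (k choose j)) = (n choose j) * 2 ^ (n - j)"
proof -
  have "(\<Sum>k\<le>n. (n choose k) * (k choose j)) = (\<Sum>k\<in>{j..n}. (n choose j) * ((n - j) choose (k - j)))"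
    by (rule sum.mono_neutral_cong_right) (auto simp: choose_mult)
  also have "\<dots> = (n choose j) * (\<Sum>i\<le>n - j. (n - j) choose i)"
    using assms by (simp add: sum_distrib_left sum.atLeastAtMost_shift_0 atLeast0AtMost comp_def)
  also have "\<dots> = (n choose j) * 2 ^ (n - j)"
    by (simp add: choose_row_sum)
  finally show ?thesis .
qed

lemma delannoy_eq_sum_choose_square: "delannoy n = (\<Sum>k\<le>n. 2 ^ k * (n choose k)\<^sup>2)"
proof -
  have vandermonde': "(n + k) choose k = (\<Sum>j\<le>n. (n choose j) * (k choose j))" if "k \<le> n" for k
  proof -
    have "(n + k) choose k = (\<Sum>j\<le>k. (n choose j) * (k choose (k - j)))"
      by (rule vandermonde[symmetric])
    also have "\<dots> = (\<Sum>j\<le>n. (n choose j) * (k choose j))"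
      using that by (intro sum.mono_neutral_cong_left) (auto simp flip: binomial_symmetric)
    finally show ?thesis .
  qed
  have "delannoy n = (\<Sum>k\<le>n. \<Sum>j\<le>n. (n choose j) * ((n choose k) * (k choose j)))"
    unfolding delannoy_def atLeast0AtMost
    by (rule sum.cong) (auto simp: vandermonde' sum_distrib_left mult.left_commute)
  also have "\<dots> = (\<Sum>j\<le>n. (n choose j) * (\<Sum>k\<le>n. (n choose k) * (k choose j)))"
    by (subst sum.swap) (simp add: sum_distrib_left)
  also have "\<dots> = (\<Sum>j\<le>n. 2 ^ (n - j) * (n choose j)\<^sup>2)"
    by (intro sum.cong refl) (simp add: sum_choose_mult_choose power2_eq_square)
  also have "\<dots> = (\<Sum>j\<le>n. 2 ^ (n - j) * (n choose (n - j))\<^sup>2)"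
    by (rule sum.cong) (simp_all flip: binomial_symmetric)
  also have "\<dots> = (\<Sum>k\<le>n. 2 ^ k * (n choose k)\<^sup>2)"
    using sum.atLeastAtMost_rev[of "\<lambda>k. 2 ^ k * (n choose k)\<^sup>2" 0 n] by (simp add: atLeast0AtMost)
  finally show ?thesis .
qed

lemma delannoy_odd_eq_sum_shifted:
  assumes "odd n"
  shows "int (delannoy n) + 1 + 2 ^ (n + 1) = (\<Sum>k\<le>n. 2 ^ k * ((-1) ^ k * int (n choose k) - 1)\<^sup>2)"
proof -
  have expand: "2 ^ k * ((-1) ^ k * c - 1)\<^sup>2 = 2 ^ k * c\<^sup>2 - 2 * ((-2) ^ k * c) + 2 ^ k"
    for k and c :: int
  proof -
    have "((-1::int) ^ k)\<^sup>2 = 1"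
      by (simp flip: power_mult)
    then show ?thesis
      by (simp add: power2_eq_square algebra_simps flip: power_mult_distrib)
  qed
  have alternating: "(\<Sum>k\<le>n. (-2) ^ k * int (n choose k)) = -1"
    using binomial_ring[of "-2 :: int" 1 n] assms by (simp add: mult.commute)
  have geometric: "(\<Sum>k\<le>n. (2::int) ^ k) = 2 ^ (n + 1) - 1"
    by (induction n) auto
  show ?thesis
    unfolding expand sum.distrib sum_subtractf
    by (simp add: delannoy_eq_sum_choose_square of_nat_sum alternating geometric
        flip: sum_distrib_left)
qed

lemma pow2_dvd_mult_imp_dvd:
  fixes i c :: nat
  assumes "0 < i" "i < 2 ^ (L + 1)" "2 ^ m dvd i * c"
  shows "2 ^ (m - L) dvd c"
  using assms
proof (induction L arbitrary: i m)
  case 0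
  then have "i = 1" by simp
  with 0 show ?case by simp
next
  case (Suc L)
  show ?case
  proof (cases "even i")
    case False
    then have "coprime (2 ^ m) i"
      by (simp add: coprime_commute)
    with Suc.prems(3) have "2 ^ m dvd c"
      using coprime_dvd_mult_right_iff by blast
    then show ?thesis
      by (rule dvd_trans[rotated]) (simp add: le_imp_power_dvd)
  next
    case True
    then obtain j where j: "i = 2 * j" ..
    show ?thesis
    proof (cases m)
      case 0
      then show ?thesis by simp
    next
      case (Suc m')
      with Suc.prems(3) j have "2 ^ m' dvd j * c"
        by (simp add: mult.assoc)
      moreover have "0 < j" "j < 2 ^ (L + 1)"
        using Suc.prems(1,2) j by auto
      ultimately show ?thesis
        using Suc.IH \<open>m = Suc m'\<close> by simp
    qed
  qed
qed

lemma pow2_dvd_choose_pow2: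
  assumes "0 < i" "i < 2 ^ (L + 1)" "i \<le> 2 ^ a"
  shows "2 ^ (a - L) dvd (2 ^ a choose i)"
proof -
  have "i * (2 ^ a choose i) = 2 ^ a * ((2 ^ a - 1) choose (i - 1))"
    using Suc_times_binomial[of "i - 1" "2 ^ a - 1"] assms(1) by simp
  then have "2 ^ a dvd i * (2 ^ a choose i)"
    by simp
  with assms(1,2) show ?thesis
    by (rule pow2_dvd_mult_imp_dvd)
qed

lemma pow2_dvd_alternating_choose_pred:
  assumes "k < 2 ^ (L + 1)" "k < 2 ^ a"
  shows "(2::int) ^ (a - L) dvd (-1) ^ k * int ((2 ^ a - 1) choose k) - 1"
  using assms
proof (induction k)
  case 0
  then show ?case by simp
next
  case (Suc k)
  have "2 ^ a choose Suc k = ((2 ^ a - 1) choose k) + ((2 ^ a - 1) choose Suc k)"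
    using binomial_Suc_Suc[of "2 ^ a - 1" k] by simp
  then have pascal: "(-1) ^ Suc k * int ((2 ^ a - 1) choose Suc k) - 1
      = (-1) ^ Suc k * int (2 ^ a choose Suc k) + ((-1) ^ k * int ((2 ^ a - 1) choose k) - 1)"
    by (simp add: algebra_simps)
  have "2 ^ (a - L) dvd (2 ^ a choose Suc k)"
    using pow2_dvd_choose_pow2[of "Suc k" L a] Suc.prems by simp
  then have "(2::int) ^ (a - L) dvd int (2 ^ a choose Suc k)"
    by (metis int_dvd_int_iff of_nat_numeral of_nat_power)
  with Suc.IH Suc.prems show ?case
    unfolding pascal by simp
qed

lemma double_plus_two_le_pow2: "3 \<le> a \<Longrightarrow> 2 * a + 2 \<le> (2::nat) ^ a"
  by (induction a rule: dec_induct) auto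

lemma pow2_dvd_pow2_mult_square:
  fixes y :: int
  assumes "2 ^ (a - L) dvd y" "6 \<le> k" "2 ^ L \<le> k"
  shows "2 ^ (2 * a + 2) dvd 2 ^ k * y\<^sup>2"
proof -
  have "2 * L + 2 \<le> k"
    using double_plus_two_le_pow2[of L] assms(2,3) by (cases "L \<le> 2") auto
  then have "(2::int) ^ (2 * a + 2) dvd 2 ^ (k + 2 * (a - L))"
    by (intro le_imp_power_dvd) linarith
  moreover obtain w where "y = 2 ^ (a - L) * w"
    using assms(1) ..
  then have "2 ^ k * y\<^sup>2 = 2 ^ (k + 2 * (a - L)) * w\<^sup>2"
    by (simp add: power_mult_distrib power_add power_mult[symmetric] mult.commute)
  ultimately show ?thesis
    by simp
qed

lemma pow2_dvd_delannoy_succ_term: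
  assumes "3 \<le> a" "6 \<le> k" "k \<le> 2 ^ a + 1"
  shows "(2::int) ^ (2 * a + 2) dvd 2 ^ k * (int ((2 ^ a + 1) choose k))\<^sup>2"
proof (cases "2 ^ a \<le> k")
  case True
  with double_plus_two_le_pow2[OF assms(1)] have "(2::int) ^ (2 * a + 2) dvd 2 ^ k"
    by (intro le_imp_power_dvd) simp
  then show ?thesis
    by (rule dvd_mult2)
next
  case False
  obtain L where L: "2 ^ L \<le> k" "k < 2 ^ (L + 1)"
    using ex_power_ivl1[of 2 k] assms(2) by auto
  obtain j where j: "k = Suc j"
    using assms(2) by (cases k) auto
  have "2 ^ (a - L) dvd (2 ^ a choose j) + (2 ^ a choose k)"
    using pow2_dvd_choose_pow2[of j L a] pow2_dvd_choose_pow2[of k L a] j L False assms(2)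
    by simp
  then have "(2::int) ^ (a - L) dvd int ((2 ^ a + 1) choose k)"
    unfolding j by (metis binomial_Suc_Suc Suc_eq_plus1 int_dvd_int_iff of_nat_numeral of_nat_power)
  then show ?thesis
    using pow2_dvd_pow2_mult_square assms(2) L(1) by blast
qed

lemma pow2_dvd_delannoy_pred_term:
  assumes "6 \<le> k" "k \<le> 2 ^ a - 1"
  shows "(2::int) ^ (2 * a + 2) dvd 2 ^ k * ((-1) ^ k * int ((2 ^ a - 1) choose k) - 1)\<^sup>2"
proof -
  obtain L where L: "2 ^ L \<le> k" "k < 2 ^ (L + 1)"
    using ex_power_ivl1[of 2 k] assms(1) by auto
  have "k < 2 ^ a"
    using assms(2) by (simp add: le_diff_conv2)
  then show ?thesis
    using pow2_dvd_pow2_mult_square pow2_dvd_alternating_choose_pred L assms(1) by blast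
qed

lemma of_nat_choose_eq_prod:
  "(of_nat (n choose k) :: 'a::field_char_0) = (\<Prod>i<k. of_nat n - of_nat i) / fact k"
  by (simp add: binomial_gbinomial gbinomial_prod_rev atLeast0LessThan)

text \<open>
  For \<open>n = 8z \<plusminus> 1\<close> the summands with \<open>k \<le> 5\<close> are polynomials in \<open>z\<close> whose
  denominators divide \<open>120\<^sup>2\<close>; the powers of 2 among them are cancelled by the factors
  \<open>8z\<close>, so clearing denominators costs only the odd factor 225.
\<close>

lemma delannoy_succ_head_dvd:
  fixes z :: nat
  shows "256 * (int z)\<^sup>2 dvd 225 * ((\<Sum>k\<le>5. 2 ^ k * (int ((8 * z + 1) choose k))\<^sup>2) - 3 - 32 * int z)"
  by (rule dvdI[where k = "192 + 790 * int z + 1020 * int z ^ 2 + 13440 * int z ^ 3 + 45056 * int z ^ 4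
      - 368640 * int z ^ 5 + 1556480 * int z ^ 6 - 2621440 * int z ^ 7 + 2097152 * int z ^ 8"])
    (subst of_int_eq_iff[where 'a = rat, symmetric],
      simp add: of_nat_choose_eq_prod numeral_eq_Suc atMost_Suc lessThan_Suc field_simps)

lemma delannoy_pred_head_dvd:
  fixes z :: nat
  assumes "1 \<le> z"
  shows "256 * (int z)\<^sup>2 dvd 225 * (\<Sum>k\<le>5. 2 ^ k * ((-1) ^ k * int ((8 * z - 1) choose k) - 1)\<^sup>2)"
  by (rule dvdI[where k = "15422 - 182950 * int z + 1050140 * int z ^ 2 - 3690880 * int z ^ 3
      + 8574976 * int z ^ 4 - 13312000 * int z ^ 5 + 13352960 * int z ^ 6 - 7864320 * int z ^ 7
      + 2097152 * int z ^ 8"])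
    (use assms in \<open>subst of_int_eq_iff[where 'a = rat, symmetric],
      simp add: of_nat_choose_eq_prod of_nat_diff numeral_eq_Suc atMost_Suc lessThan_Suc field_simps\<close>)

lemma pow2_dvd_cancel_225:
  fixes y :: int
  assumes "3 \<le> a" "256 * (int (2 ^ (a - 3)))\<^sup>2 dvd 225 * y"
  shows "2 ^ (2 * a + 2) dvd y"
proof -
  have "2 * a + 2 = 8 + (a - 3) + (a - 3)"
    using assms(1) by simp
  then have "(2::int) ^ (2 * a + 2) = 2 ^ 8 * 2 ^ (a - 3) * 2 ^ (a - 3)"
    by (metis power_add)
  then have "(2::int) ^ (2 * a + 2) = 256 * (int (2 ^ (a - 3)))\<^sup>2"
    by (simp add: power2_eq_square)
  moreover have "coprime (225::int) (2 ^ n)" for n :: nat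
    by simp
  ultimately show ?thesis
    using assms(2) coprime_dvd_mult_right_iff coprime_commute by metis
qed

lemma dvd_sum_atMost_diff:
  fixes f :: "nat \<Rightarrow> 'a::comm_ring_1"
  assumes "m \<le> n" "\<And>k. m < k \<Longrightarrow> k \<le> n \<Longrightarrow> d dvd f k"
  shows "d dvd (\<Sum>k\<le>n. f k) - (\<Sum>k\<le>m. f k)"
proof -
  have "{..n} = {..m} \<union> {m<..n}"
    using assms(1) by auto
  then have "(\<Sum>k\<le>n. f k) = (\<Sum>k\<le>m. f k) + (\<Sum>k\<in>{m<..n}. f k)"
    by (auto intro: sum.union_disjoint)
  with assms(2) show ?thesis
    by (auto intro!: dvd_sum)
qed

lemma delannoy_pow2_succ_cong:
  assumes "3 \<le> a"
  shows "[int (delannoy (2 ^ a + 1)) = 3 + 2 ^ (a + 2)] (mod 2 ^ (2 * a + 2))"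
proof -
  define z :: nat where "z = 2 ^ (a - 3)"
  have pow_a: "2 ^ a = 8 * z"
    using assms power_add[of "2::nat" 3 "a - 3"] by (simp add: z_def)
  define t where "t k = 2 ^ k * (int ((2 ^ a + 1) choose k))\<^sup>2" for k
  have "(2::int) ^ (a + 2) = 32 * int z"
    using arg_cong[OF pow_a, of int] by (simp add: power_add)
  then have head: "2 ^ (2 * a + 2) dvd (\<Sum>k\<le>5. t k) - (3 + 2 ^ (a + 2))"
    using pow2_dvd_cancel_225[OF assms] delannoy_succ_head_dvd[of z]
    by (simp add: t_def pow_a z_def diff_diff_eq)
  have "5 \<le> (2::nat) ^ a + 1"
    using double_plus_two_le_pow2[OF assms] assms by linarith
  then have tail: "2 ^ (2 * a + 2) dvd (\<Sum>k\<le>2 ^ a + 1. t k) - (\<Sum>k\<le>5. t k)"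
    using pow2_dvd_delannoy_succ_term[OF assms] by (intro dvd_sum_atMost_diff) (auto simp: t_def)
  have "int (delannoy (2 ^ a + 1)) = (\<Sum>k\<le>2 ^ a + 1. t k)"
    by (simp add: delannoy_eq_sum_choose_square t_def)
  then have "int (delannoy (2 ^ a + 1)) - (3 + 2 ^ (a + 2))
      = ((\<Sum>k\<le>2 ^ a + 1. t k) - (\<Sum>k\<le>5. t k)) + ((\<Sum>k\<le>5. t k) - (3 + 2 ^ (a + 2)))"
    by simp
  then show ?thesis
    unfolding cong_iff_dvd_diff using dvd_add[OF tail head] by argo
qed

lemma delannoy_pow2_pred_cong:
  assumes "3 \<le> a"
  shows "[int (delannoy (2 ^ a - 1)) = -1] (mod 2 ^ (2 * a + 2))"
proof -
  define z :: nat where "z = 2 ^ (a - 3)"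
  have pow_a: "2 ^ a = 8 * z"
    using assms power_add[of "2::nat" 3 "a - 3"] by (simp add: z_def)
  define n :: nat where "n = 2 ^ a - 1"
  define t where "t k = 2 ^ k * ((-1) ^ k * int (n choose k) - 1)\<^sup>2" for k
  have head: "2 ^ (2 * a + 2) dvd (\<Sum>k\<le>5. t k)"
    using pow2_dvd_cancel_225[OF assms] delannoy_pred_head_dvd[of z]
    by (simp add: t_def n_def pow_a z_def)
  have n_ge: "2 * a + 2 \<le> n + 1"
    using double_plus_two_le_pow2[OF assms] by (simp add: n_def)
  have "5 \<le> n"
    using n_ge assms by linarith
  then have tail: "2 ^ (2 * a + 2) dvd (\<Sum>k\<le>n. t k) - (\<Sum>k\<le>5. t k)"
    using pow2_dvd_delannoy_pred_term by (intro dvd_sum_atMost_diff) (auto simp: t_def n_def)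
  have pow_n: "(2::int) ^ (2 * a + 2) dvd 2 ^ (n + 1)"
    using n_ge by (rule le_imp_power_dvd)
  have "odd n"
    using assms by (simp add: n_def)
  then have "int (delannoy n) + 1 = (\<Sum>k\<le>n. t k) - 2 ^ (n + 1)"
    using delannoy_odd_eq_sum_shifted by (simp add: t_def algebra_simps)
  then show ?thesis
    unfolding cong_iff_dvd_diff n_def[symmetric] using dvd_diff[OF dvd_add[OF tail head] pow_n] by simp
qed

theorem theorem3p1:
  fixes a :: nat
  assumes "a \<ge> 2"
  shows "[int (delannoy (2 ^ a + 1)) = 3 + 2 ^ (a + 2)] (mod (4 ^ (a + 1)))
       \<and> [int (delannoy (2 ^ a - 1)) = - 1] (mod (4 ^ (a + 1)))"
proof (cases "a = 2")
  case True
  have "delannoy 5 = 1683" "delannoy 3 = 63"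
    by (simp_all add: delannoy_def numeral_eq_Suc)
  with True show ?thesis
    by (simp add: cong_iff_dvd_diff)
next
  case False
  with assms have "3 \<le> a"
    by simp
  moreover have "(4::int) ^ (a + 1) = 2 ^ (2 * a + 2)"
    by (simp add: power_mult)
  ultimately show ?thesis
    using delannoy_pow2_succ_cong delannoy_pow2_pred_cong by simp
qed

end
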